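(* Let $n,m$ be positive integers. Consider the map sending $f\in\mathcal{A}([n];m)$ (a $P$-partition of the $n$-element antichain with $|f(i)|\le m$ for all $i$) to the following sequence of card placements of a lazy $m$-shelf shuffler: for $i=1,2,\ldots,n$ in turn, card $i$ is placed on shelf $|f(i)|$, on top of the cards already on that shelf if $f(i)$ is barred, and below the cards already on that shelf if $f(i)$ is unbarred. This map is a bijection between $\mathcal{A}([n];m)$ and the set of outcomes (sequences of card placements) of the lazy $m$-shelf shuffler, and the resulting order of the deck from top to bottom is $\pi(f)(1),\pi(f)(2),\ldots,\pi(f)(n)$, where $\pi(f)$ is the sorting permutation of $f$.
   Context: Integers are written $\ldots,\bar 2,\bar 1,0,1,2,\ldots$ with $\bar i=-i$, totally ordered by $0<_{\mathbb Z}\bar1<_{\mathbb Z}1<_{\mathbb Z}\bar2<_{\mathbb Z}2<_{\mathbb Z}\cdots$, and $|\bar j|=j$. A $P$-partition of the antichain $[n]$ (no relations) is any function $f:[n]\to\mathbb Z$; $\mathcal{A}([n];m)$ is the set of such $f$ with $|f(i)|\le m$ for all $i$. The sorting permutation $\pi=\pi(f)\in S_n$ is the unique permutation (viewed as the total order $\pi(1)<_\pi\cdots<_\pi\pi(n)$) such that: if $f(i)<_{\mathbb Z}f(j)$ then $i<_\pi j$; if $i<j$ and $f(i)=f(j)\in\{0,1,2,\ldots\}$ then $i<_\pi j$; if $i<j$ and $f(i)=f(j)\in\{\bar1,\bar2,\ldots\}$ then $j<_\pi i$. Lazy $m$-shelf shuffler: a deck with cards labeled $1,\ldots,n$ from top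 to bottom; cards are taken in order $1,2,\ldots,n$; each card is placed either on shelf $0$ (always below the cards already there) or on one of shelves $1,\ldots,m$, either on top of or below the cards already there (so there are $2m+1$ choices per card). At the end the piles are stacked with shelf $0$ on top, then shelf $1$, ..., shelf $m$ at the bottom. An outcome is the sequence of choices made for cards $1,\ldots,n$. *)

theory Defs
  imports "HOL-Library.FuncSet" "HOL-Combinatorics.Permutations"
begin

text \<open>Barred integers are represented by negative ints: bar j = -j.
  The total order 0 < bar 1 < 1 < bar 2 < 2 < ... is given by the key below.\<close>

definition zkey :: "int \<Rightarrow> int" where
  "zkey x = 2 * \<bar>x\<bar> - (if x < 0 then 1 else 0)"

definition zless :: "int \<Rightarrow> int \<Rightarrow> bool" where
  "zless x y \<longleftrightarrow> zkey x < zkey y"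

definition Apart :: "nat \<Rightarrow> nat \<Rightarrow> (nat \<Rightarrow> int) set" where
  "Apart n m = {f \<in> {1..n} \<rightarrow>\<^sub>E UNIV. \<forall>i\<in>{1..n}. \<bar>f i\<bar> \<le> int m}"

text \<open>Sorting permutation: pi permutes {1..n}; the total order is
  pi(1) <_pi ... <_pi pi(n), i.e. i <_pi j iff inv pi i < inv pi j.\<close>
definition is_sorting_perm :: "nat \<Rightarrow> (nat \<Rightarrow> int) \<Rightarrow> (nat \<Rightarrow> nat) \<Rightarrow> bool" where
  "is_sorting_perm n f \<pi> \<longleftrightarrow> \<pi> permutes {1..n} \<and>
     (\<forall>i\<in>{1..n}. \<forall>j\<in>{1..n}.
        (zless (f i) (f j) \<longrightarrow> inv \<pi> i < inv \<pi> j) \<and>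
        (i < j \<and> f i = f j \<and> f i \<ge> 0 \<longrightarrow> inv \<pi> i < inv \<pi> j) \<and>
        (i < j \<and> f i = f j \<and> f i < 0 \<longrightarrow> inv \<pi> j < inv \<pi> i))"

definition sorting_perm :: "nat \<Rightarrow> (nat \<Rightarrow> int) \<Rightarrow> (nat \<Rightarrow> nat)" where
  "sorting_perm n f = (THE \<pi>. is_sorting_perm n f \<pi>)"

text \<open>A single card placement is a pair (shelf, on_top).  Shelf 0 only allows
  placement below, encoded as (0, False); shelves 1..m allow both.\<close>
definition choices :: "nat \<Rightarrow> (nat \<times> bool) set" where
  "choices m = {(0, False)} \<union> {(s, b). 1 \<le> s \<and> s \<le> m}"

definition outcomes :: "nat \<Rightarrow> nat \<Rightarrow> (nat \<Rightarrow> nat \<times> bool) set" where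
  "outcomes n m = {1..n} \<rightarrow>\<^sub>E choices m"

fun deal :: "(nat \<Rightarrow> nat \<times> bool) \<Rightarrow> nat \<Rightarrow> (nat \<Rightarrow> nat list)" where
  "deal c 0 = (\<lambda>_. [])"
| "deal c (Suc k) = (let S = deal c k; s = fst (c (Suc k)) in
     S(s := (if snd (c (Suc k)) then Suc k # S s else S s @ [Suc k])))"

text \<open>Final deck, top to bottom: shelf 0 on top, ..., shelf m at bottom.\<close>
definition deck :: "nat \<Rightarrow> nat \<Rightarrow> (nat \<Rightarrow> nat \<times> bool) \<Rightarrow> nat list" where
  "deck n m c = concat (map (deal c n) [0..<Suc m])"

definition to_outcome :: "nat \<Rightarrow> (nat \<Rightarrow> int) \<Rightarrow> (nat \<Rightarrow> nat \<times> bool)" where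
  "to_outcome n f = (\<lambda>i\<in>{1..n}. (nat \<bar>f i\<bar>, f i < 0))"

end

theory Submission
  imports Defs "HOL-Library.Product_Lexorder"
begin

(* A card placed on top of shelf s lies above everything already there, a card placed below
   lies underneath, so in the end shelf s holds, from top to bottom, the cards i with
   f(i) = bar s in decreasing order followed by those with f(i) = s in increasing order.
   Hence the deck lists [n] increasingly for the lexicographic key (zkey (f i), -i or i
   according as f(i) is barred or not), and the order of these keys is precisely the order
   <_pi defining the sorting permutation; since a permutation is determined by the list of
   its values, the deck is pi(f)(1), ..., pi(f)(n). The map to outcomes is invertible
   because shelf 0 admits only the placement below, just as 0 has no barred version. *)

lemma sorted_wrt_upt_iff:
  "sorted_wrt P [a..<b] \<longleftrightarrow> (\<forall>x y. a \<le> x \<longrightarrow> x < y \<longrightarrow> y < b \<longrightarrow> P x y)"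
  by (induction b) (auto simp: sorted_wrt_append less_Suc_eq)

lemma sorted_wrt_filter_mono:
  "sorted_wrt R xs \<Longrightarrow> (\<And>x y. Q x \<Longrightarrow> Q y \<Longrightarrow> R x y \<Longrightarrow> P x y) \<Longrightarrow> sorted_wrt P (filter Q xs)"
  by (induction xs) auto

lemma sorted_wrt_concat:
  "sorted_wrt P (concat xss) \<longleftrightarrow>
     (\<forall>xs\<in>set xss. sorted_wrt P xs) \<and> sorted_wrt (\<lambda>xs ys. \<forall>x\<in>set xs. \<forall>y\<in>set ys. P x y) xss"
  by (induction xss) (auto simp: sorted_wrt_append)

lemma ex_permutes_map_eq:
  assumes "distinct xs" "distinct ys" "set xs = set ys"
  shows "\<exists>\<pi>. \<pi> permutes set ys \<and> map \<pi> ys = xs"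
proof -
  have len: "length xs = length ys"
    using assms by (metis distinct_card)
  define \<pi> where "\<pi> = permutation_of_list (zip ys xs)"
  have "list_permutes (zip ys xs) (set ys)"
    using assms len by (intro list_permutesI) auto
  then have "\<pi> permutes set ys"
    unfolding \<pi>_def by (rule permutation_of_list_permutes)
  moreover have "map \<pi> ys = xs"
  proof (rule nth_equalityI)
    fix i assume "i < length (map \<pi> ys)"
    then have "(ys ! i, xs ! i) \<in> set (zip ys xs)"
      using len by (auto simp: in_set_zip)
    then show "map \<pi> ys ! i = xs ! i"
      using \<open>i < length (map \<pi> ys)\<close> assms(2) len
      by (auto simp: \<pi>_def intro: permutation_of_list_unique')
  qed (simp add: len)
  ultimately show ?thesis by blast
qed

lemma permutes_eq_if_map_eq:
  assumes "\<pi> permutes set xs" "\<sigma> permutes set xs" "map \<pi> xs = map \<sigma> xs"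
  shows "\<pi> = \<sigma>"
proof
  fix x show "\<pi> x = \<sigma> x"
    using assms by (cases "x \<in> set xs") (auto simp: permutes_not_in)
qed

lemma permutes_sorted_by_key_iff:
  fixes k :: "nat \<Rightarrow> 'a::linorder"
  assumes \<pi>: "\<pi> permutes {1..n}" and k: "inj_on k {1..n}"
  shows "sorted_wrt (<) (map (k \<circ> \<pi>) [1..<Suc n]) \<longleftrightarrow>
           (\<forall>i\<in>{1..n}. \<forall>j\<in>{1..n}. k i < k j \<longrightarrow> inv \<pi> i < inv \<pi> j)"
proof -
  have "(\<forall>i\<in>{1..n}. \<forall>j\<in>{1..n}. k i < k j \<longrightarrow> inv \<pi> i < inv \<pi> j) \<longleftrightarrow>
        (\<forall>a\<in>{1..n}. \<forall>b\<in>{1..n}. k (\<pi> a) < k (\<pi> b) \<longrightarrow> a < b)"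
  proof (intro iffI ballI impI)
    fix a b assume "\<forall>i\<in>{1..n}. \<forall>j\<in>{1..n}. k i < k j \<longrightarrow> inv \<pi> i < inv \<pi> j"
      and "a \<in> {1..n}" "b \<in> {1..n}" "k (\<pi> a) < k (\<pi> b)"
    then show "a < b"
      using \<pi> by (metis permutes_in_image permutes_inverses(2))
  next
    fix i j assume "\<forall>a\<in>{1..n}. \<forall>b\<in>{1..n}. k (\<pi> a) < k (\<pi> b) \<longrightarrow> a < b"
      and "i \<in> {1..n}" "j \<in> {1..n}" "k i < k j"
    moreover have "inv \<pi> i \<in> {1..n}" "inv \<pi> j \<in> {1..n}"
      using \<open>i \<in> {1..n}\<close> \<open>j \<in> {1..n}\<close> permutes_in_image[OF permutes_inv[OF \<pi>]] by auto
    ultimately show "inv \<pi> i < inv \<pi> j"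
      by (simp add: permutes_inverses(1)[OF \<pi>])
  qed
  also have "\<dots> \<longleftrightarrow> (\<forall>a\<in>{1..n}. \<forall>b\<in>{1..n}. a < b \<longrightarrow> k (\<pi> a) < k (\<pi> b))"
  proof -
    have "k (\<pi> a) \<noteq> k (\<pi> b)" if "a \<in> {1..n}" "b \<in> {1..n}" "a \<noteq> b" for a b
      using that inj_onD[OF k] permutes_inj[OF \<pi>] permutes_in_image[OF \<pi>] by (metis injD)
    then show ?thesis by (metis linorder_neqE order_less_asym)
  qed
  also have "\<dots> \<longleftrightarrow> sorted_wrt (<) (map (k \<circ> \<pi>) [1..<Suc n])"
    unfolding sorted_wrt_map sorted_wrt_upt_iff by auto
  finally show ?thesis ..
qed

lemma inj_zkey: "inj zkey"
  unfolding inj_def zkey_def by (auto split: if_splits simp: abs_if; presburger)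

definition sort_key :: "(nat \<Rightarrow> int) \<Rightarrow> nat \<Rightarrow> int \<times> int" where
  "sort_key f i = (zkey (f i), if f i < 0 then - int i else int i)"

lemma inj_sort_key: "inj (sort_key f)"
  by (rule injI) (auto simp: sort_key_def dest: injD[OF inj_zkey] split: if_splits)

lemma sort_key_less_iff:
  "sort_key f i < sort_key f j \<longleftrightarrow>
     zless (f i) (f j) \<or> (f i = f j \<and> (0 \<le> f i \<and> i < j \<or> f i < 0 \<and> j < i))"
  by (auto simp: sort_key_def zless_def less_prod_def le_less inj_eq[OF inj_zkey])

lemma is_sorting_perm_iff_sort_key:
  "is_sorting_perm n f \<pi> \<longleftrightarrow> \<pi> permutes {1..n} \<and>
     (\<forall>i\<in>{1..n}. \<forall>j\<in>{1..n}. sort_key f i < sort_key f j \<longrightarrow> inv \<pi> i < inv \<pi> j)"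
  unfolding is_sorting_perm_def sort_key_less_iff by (intro conj_cong refl iffI; auto)

lemma sorting_perm_eqI:
  assumes sorted: "sorted_wrt (<) (map (sort_key f) xs)" and set: "set xs = {1..n}"
  shows "map (sorting_perm n f) [1..<Suc n] = xs"
proof -
  define I where "I = [1..<Suc n]"
  have set_I: "set I = {1..n}" and "distinct I"
    unfolding I_def by auto
  have sorting_iff: "is_sorting_perm n f \<sigma> \<longleftrightarrow>
      \<sigma> permutes {1..n} \<and> sorted_wrt (<) (map (sort_key f) (map \<sigma> I))" for \<sigma>
    using permutes_sorted_by_key_iff[of \<sigma> n "sort_key f"] inj_on_subset[OF inj_sort_key, of "{1..n}" f]
    by (auto simp: is_sorting_perm_iff_sort_key I_def)
  have "distinct xs"
    using sorted by (simp add: strict_sorted_iff distinct_map)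
  then obtain \<pi> where \<pi>: "\<pi> permutes {1..n}" "map \<pi> I = xs"
    using ex_permutes_map_eq[of xs I] \<open>distinct I\<close> set set_I by auto
  have unique: "\<sigma> = \<pi>" if "is_sorting_perm n f \<sigma>" for \<sigma>
  proof -
    have \<sigma>: "\<sigma> permutes {1..n}" "sorted_wrt (<) (map (sort_key f) (map \<sigma> I))"
      using that sorting_iff by simp_all
    have "set (map \<sigma> I) = set xs"
      using permutes_image[OF \<sigma>(1)] set_I set by simp
    then have "map (sort_key f) (map \<sigma> I) = map (sort_key f) xs"
      using strict_sorted_equal[OF sorted \<sigma>(2)] by (metis list.set_map)
    then have "map \<sigma> I = map \<pi> I"
      using \<pi>(2) inj_map_eq_map[OF inj_sort_key] by metis
    then show "\<sigma> = \<pi>"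
      using permutes_eq_if_map_eq \<sigma>(1) \<pi>(1) set_I by metis
  qed
  have "is_sorting_perm n f \<pi>"
    using sorted \<pi>(1) unfolding sorting_iff \<pi>(2)[symmetric] by simp
  then have "sorting_perm n f = \<pi>"
    unfolding sorting_perm_def using unique by (rule the_equality)
  then show ?thesis
    using \<pi>(2) by (simp add: I_def)
qed

lemma deal_eq_filter:
  "deal c k s =
     rev (filter (\<lambda>i. c i = (s, True)) [1..<Suc k]) @ filter (\<lambda>i. c i = (s, False)) [1..<Suc k]"
proof (induction k)
  case (Suc k)
  obtain t b where c: "c (Suc k) = (t, b)"
    by fastforce
  have "[1..<Suc (Suc k)] = [1..<Suc k] @ [Suc k]"
    by simp
  then show ?case
    using Suc.IH by (cases b; cases "s = t") (simp_all add: c Let_def del: upt_Suc)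
qed simp

lemma set_deal: "set (deal c k s) = {i \<in> {1..k}. fst (c i) = s}"
  by (auto simp: deal_eq_filter prod_eq_iff)

definition placement_key :: "(nat \<Rightarrow> nat \<times> bool) \<Rightarrow> nat \<Rightarrow> int \<times> int" where
  "placement_key c i =
     (2 * int (fst (c i)) - of_bool (snd (c i)), if snd (c i) then - int i else int i)"

lemma sorted_deal: "sorted_wrt (\<lambda>i j. placement_key c i < placement_key c j) (deal c k s)"
  unfolding deal_eq_filter sorted_wrt_append sorted_wrt_rev
proof (intro conjI)
  show "sorted_wrt (\<lambda>i j. placement_key c j < placement_key c i)
          (filter (\<lambda>i. c i = (s, True)) [1..<Suc k])"
    by (rule sorted_wrt_filter_mono[OF sorted_wrt_upt]) (simp add: placement_key_def)
  show "sorted_wrt (\<lambda>i j. placement_key c i < placement_key c j)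
          (filter (\<lambda>i. c i = (s, False)) [1..<Suc k])"
    by (rule sorted_wrt_filter_mono[OF sorted_wrt_upt]) (simp add: placement_key_def)
qed (auto simp: placement_key_def)

lemma sorted_deck: "sorted_wrt (<) (map (placement_key c) (deck n m c))"
  unfolding deck_def sorted_wrt_map sorted_wrt_concat
proof (intro conjI)
  show "\<forall>xs\<in>set (map (deal c n) [0..<Suc m]).
          sorted_wrt (\<lambda>i j. placement_key c i < placement_key c j) xs"
    using sorted_deal by auto
  have "placement_key c i < placement_key c j"
    if "s < t" "i \<in> set (deal c n s)" "j \<in> set (deal c n t)" for s t i j
    using that by (auto simp: set_deal placement_key_def)
  then show "sorted_wrt (\<lambda>s t. \<forall>i\<in>set (deal c n s). \<forall>j\<in>set (deal c n t).
               placement_key c i < placement_key c j) [0..<Suc m]"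
    by (intro sorted_wrt_mono_rel[OF _ sorted_wrt_upt]) blast
qed

lemma set_deck:
  assumes "c \<in> outcomes n m"
  shows "set (deck n m c) = {1..n}"
proof -
  have "fst (c i) \<le> m" if "i \<in> {1..n}" for i
    using PiE_mem[OF assms[unfolded outcomes_def] that] by (auto simp: choices_def)
  then show ?thesis
    by (auto simp: deck_def set_deal less_Suc_eq_le simp del: upt_Suc)
qed

lemma placement_key_to_outcome:
  "i \<in> {1..n} \<Longrightarrow> placement_key (to_outcome n f) i = sort_key f i"
  by (auto simp: placement_key_def sort_key_def to_outcome_def zkey_def)

lemma bij_betw_to_outcome: "bij_betw (to_outcome n) (Apart n m) (outcomes n m)"
proof -
  define g where
    "g c = (\<lambda>i\<in>{1..n}. if snd (c i) then - int (fst (c i)) else int (fst (c i)))" for c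
  have "\<forall>f\<in>Apart n m. g (to_outcome n f) = f"
    by (auto simp: Apart_def g_def to_outcome_def PiE_def extensional_def fun_eq_iff)
  moreover have "\<forall>c\<in>outcomes n m. to_outcome n (g c) = c"
    by (auto simp: outcomes_def choices_def g_def to_outcome_def PiE_def Pi_def extensional_def fun_eq_iff)
  moreover have "to_outcome n ` Apart n m \<subseteq> outcomes n m"
    by (auto simp: Apart_def outcomes_def choices_def to_outcome_def nat_le_iff)
  moreover have "g ` outcomes n m \<subseteq> Apart n m"
    by (auto simp: Apart_def outcomes_def choices_def g_def PiE_def Pi_def)
  ultimately show ?thesis
    by (rule bij_betw_byWitness)
qed

theorem proposition2p5:
  fixes n m :: nat
  assumes "n > 0" and "m > 0"
  shows "bij_betw (to_outcome n) (Apart n m) (outcomes n m) \<and>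
         (\<forall>f\<in>Apart n m. deck n m (to_outcome n f) = map (sorting_perm n f) [1..<Suc n])"
proof (intro conjI ballI)
  show bij: "bij_betw (to_outcome n) (Apart n m) (outcomes n m)"
    by (rule bij_betw_to_outcome)
  fix f assume "f \<in> Apart n m"
  with bij have "to_outcome n f \<in> outcomes n m"
    by (rule bij_betw_apply)
  then have set: "set (deck n m (to_outcome n f)) = {1..n}"
    by (rule set_deck)
  then have "map (placement_key (to_outcome n f)) (deck n m (to_outcome n f)) =
             map (sort_key f) (deck n m (to_outcome n f))"
    by (simp add: placement_key_to_outcome)
  then have "sorted_wrt (<) (map (sort_key f) (deck n m (to_outcome n f)))"
    using sorted_deck by metis
  then show "deck n m (to_outcome n f) = map (sorting_perm n f) [1..<Suc n]"
    using set by (rule sorting_perm_eqI[symmetric])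
qed

end
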